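(* Let $c_0=0.2078750206\ldots$ be the positive number defined by $2\sum_{\nu=1}^{\infty}c_0^{\nu^2/2}=1$. For any $q\in\mathbb{C}$ with $0<|q|\leq c_0$, the zeros of the entire function $z\mapsto\theta(q,z)=\sum_{j=0}^{\infty}q^{j(j+1)/2}z^j$ are separated in modulus, i.e. they can be enumerated so that their moduli form a strictly increasing sequence tending to infinity (in particular all zeros are simple).
   Context: The partial theta function is $\theta(q,z):=\sum_{j=0}^{\infty}q^{j(j+1)/2}z^j$ for $q\in\mathbb{C}$, $0<|q|<1$, $z\in\mathbb{C}$; for fixed $q$ it is an entire function of $z$. *)

theory Defs
  imports "HOL-Analysis.Analysis"
begin

definition partial_theta :: "complex \<Rightarrow> complex \<Rightarrow> complex" where
  "partial_theta q z = (\<Sum>j. q ^ (j * (j + 1) div 2) * z ^ j)"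

text \<open>c0: the positive number with 2 * sum_{nu>=1} c0^(nu^2/2) = 1
  (the series converges only for c0 < 1, and the sum is strictly increasing there).\<close>
definition c0 :: real where
  "c0 = (THE c. 0 < c \<and> c < 1 \<and>
          (\<lambda>\<nu>::nat. 2 * c powr (real ((\<nu> + 1)\<^sup>2) / 2)) sums 1)"

end

theory Submission
  imports Defs "HOL-Complex_Analysis.Complex_Analysis"
begin

text \<open>Put s = sqrt |q|. On the circle |z| = s^-(2k+1) the j-th term of theta(q,z) has modulus
  s^((j-k)^2) times that of the k-th term. So the k-th term dominates the sum of all the others as
  soon as 2 * (sum over nu >= 1 of s^(nu^2)) <= 1, which is exactly |q| <= c0, and then Rouche's
  theorem shows that theta(q,-) has exactly k zeros, counted with multiplicity, inside that circle.
  Hence each annulus between two consecutive such circles contains exactly one zero, a simple one.\<close>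

definition square_power_series :: "real \<Rightarrow> real" where
  "square_power_series x = (\<Sum>\<nu>. x ^ (\<nu> + 1)\<^sup>2)"

lemma square_power_le_geometric:
  fixes x :: real
  assumes "0 \<le> x" "x \<le> 1"
  shows "x ^ (\<nu> + 1)\<^sup>2 \<le> x * x ^ \<nu>"
proof -
  have "\<nu> + 1 \<le> (\<nu> + 1)\<^sup>2" by (simp add: power2_eq_square)
  then have "x ^ (\<nu> + 1)\<^sup>2 \<le> x ^ (\<nu> + 1)" using assms by (rule power_decreasing)
  then show ?thesis by simp
qed

lemma summable_square_powers:
  fixes x :: real
  assumes "0 \<le> x" "x < 1"
  shows "summable (\<lambda>\<nu>. x ^ (\<nu> + 1)\<^sup>2)"
proof (rule summable_comparison_test)
  show "\<exists>N. \<forall>\<nu>\<ge>N. norm (x ^ (\<nu> + 1)\<^sup>2) \<le> x * x ^ \<nu>"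
    using square_power_le_geometric[of x] assms by auto
  show "summable (\<lambda>\<nu>. x * x ^ \<nu>)"
    using assms by (intro summable_mult summable_geometric) auto
qed

lemma square_power_series_le:
  assumes "0 \<le> x" "x < 1"
  shows "square_power_series x \<le> x / (1 - x)"
proof -
  have "square_power_series x \<le> (\<Sum>\<nu>. x * x ^ \<nu>)"
    unfolding square_power_series_def using assms square_power_le_geometric[of x]
    by (intro suminf_le summable_square_powers summable_mult summable_geometric) auto
  also have "\<dots> = x * (\<Sum>\<nu>. x ^ \<nu>)" using assms by (intro suminf_mult summable_geometric) simp
  also have "\<dots> = x / (1 - x)" using assms by (simp add: suminf_geometric)
  finally show ?thesis .
qed

lemma square_power_series_mono:
  "0 \<le> x \<Longrightarrow> x \<le> y \<Longrightarrow> y < 1 \<Longrightarrow> square_power_series x \<le> square_power_series y"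
  unfolding square_power_series_def by (intro suminf_le summable_square_powers power_mono) auto

lemma square_power_series_strict_mono:
  assumes "0 \<le> x" "x < y" "y < 1"
  shows "square_power_series x < square_power_series y"
proof -
  let ?d = "\<lambda>\<nu>. y ^ (\<nu> + 1)\<^sup>2 - x ^ (\<nu> + 1)\<^sup>2"
  have "summable ?d" using assms by (intro summable_diff summable_square_powers) auto
  then have "?d 0 \<le> suminf ?d"
    using assms by (intro sum_le_suminf[of _ "{0}", simplified]) (auto intro!: power_mono)
  also have "suminf ?d = square_power_series y - square_power_series x"
    unfolding square_power_series_def using assms
    by (intro suminf_diff[symmetric] summable_square_powers) auto
  finally show ?thesis using assms by simp
qed

lemma continuous_on_square_power_series:
  assumes "0 \<le> a" "a \<le> b" "b < 1"
  shows "continuous_on {a..b} square_power_series"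
proof -
  have "uniform_limit {a..b} (\<lambda>n x. \<Sum>\<nu><n. x ^ (\<nu> + 1)\<^sup>2) square_power_series sequentially"
    unfolding square_power_series_def[abs_def]
  proof (rule Weierstrass_m_test)
    show "norm (x ^ (\<nu> + 1)\<^sup>2) \<le> b ^ (\<nu> + 1)\<^sup>2" if "x \<in> {a..b}" for \<nu> x
      using that assms by (auto intro!: power_mono)
    show "summable (\<lambda>\<nu>. b ^ (\<nu> + 1)\<^sup>2)"
      using assms by (intro summable_square_powers) auto
  qed
  then show ?thesis
    by (rule uniform_limit_theorem[rotated]) (auto intro!: always_eventually continuous_intros)
qed

lemma c0_series_sums_iff:
  assumes "0 < c" "c < 1"
  shows "(\<lambda>\<nu>. 2 * c powr (real ((\<nu> + 1)\<^sup>2) / 2)) sums 1 \<longleftrightarrow> 2 * square_power_series (sqrt c) = 1"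
proof -
  have "c powr (real n / 2) = sqrt c ^ n" for n
    using assms by (simp add: powr_half_sqrt_powr powr_realpow real_sqrt_power)
  then have "(\<lambda>\<nu>. 2 * c powr (real ((\<nu> + 1)\<^sup>2) / 2)) = (\<lambda>\<nu>. 2 * sqrt c ^ (\<nu> + 1)\<^sup>2)"
    by presburger
  moreover have "(\<lambda>\<nu>. 2 * sqrt c ^ (\<nu> + 1)\<^sup>2) sums (2 * square_power_series (sqrt c))"
    unfolding square_power_series_def using assms
    by (intro sums_mult summable_sums summable_square_powers) auto
  ultimately show ?thesis by (auto dest: sums_unique2)
qed

lemma c0_characterization: "0 < c0 \<and> c0 < 1 \<and> 2 * square_power_series (sqrt c0) = 1"
proof -
  define P where "P c \<longleftrightarrow> 0 < c \<and> c < 1 \<and> 2 * square_power_series (sqrt c) = 1" for c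
  have lower: "2 * square_power_series (1/5) \<le> 1"
    using square_power_series_le[of "1/5"] by simp
  have upper: "1 \<le> 2 * square_power_series (1/2)"
  proof -
    have "(\<Sum>\<nu><2. (1/2::real) ^ (\<nu> + 1)\<^sup>2) \<le> square_power_series (1/2)"
      unfolding square_power_series_def by (intro sum_le_suminf summable_square_powers) auto
    then show ?thesis by (simp add: numeral_2_eq_2)
  qed
  have "continuous_on {1/5..1/2} (\<lambda>x. 2 * square_power_series x)"
    by (intro continuous_intros continuous_on_square_power_series) auto
  with IVT'[of "\<lambda>x. 2 * square_power_series x", OF lower upper]
  obtain x where x: "1/5 \<le> x" "x \<le> 1/2" "2 * square_power_series x = 1"
    by auto
  have "P (x\<^sup>2)" using x by (auto simp: P_def power_less_one_iff)
  moreover have "c = x\<^sup>2" if "P c" for c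
  proof -
    have "\<not> sqrt c < x" "\<not> x < sqrt c"
      using that x square_power_series_strict_mono[of "sqrt c" x]
        square_power_series_strict_mono[of x "sqrt c"] by (auto simp: P_def)
    then have "sqrt c = x" by linarith
    then show ?thesis using that by (auto simp: P_def)
  qed
  ultimately have "P (THE c. P c)" by (intro theI[of P]) auto
  moreover have "c0 = (THE c. P c)"
    unfolding c0_def P_def by (rule arg_cong[where f = The], rule ext) (use c0_series_sums_iff in blast)
  ultimately show ?thesis by (simp add: P_def)
qed

definition partial_theta_coeff :: "complex \<Rightarrow> nat \<Rightarrow> complex" where
  "partial_theta_coeff q j = q ^ (j * (j + 1) div 2)"

lemma partial_theta_eq_power_series:
  "partial_theta q = (\<lambda>z. \<Sum>j. partial_theta_coeff q j * z ^ j)"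
  by (simp add: partial_theta_def partial_theta_coeff_def fun_eq_iff)

lemma norm_partial_theta_term:
  "norm (partial_theta_coeff q j * z ^ j) = sqrt (norm q) ^ (j * (j + 1)) * norm z ^ j"
proof -
  have "norm (partial_theta_coeff q j) = (sqrt (norm q) ^ 2) ^ (j * (j + 1) div 2)"
    by (simp add: partial_theta_coeff_def norm_power)
  also have "\<dots> = sqrt (norm q) ^ (2 * (j * (j + 1) div 2))"
    by (rule power_mult[symmetric])
  also have "2 * (j * (j + 1) div 2) = j * (j + 1)"
    by simp
  finally show ?thesis by (simp add: norm_mult norm_power)
qed

lemma summable_theta_majorant:
  fixes s \<rho> :: real
  assumes "0 \<le> s" "s < 1" "0 \<le> \<rho>"
  shows "summable (\<lambda>j. s ^ (j * (j + 1)) * \<rho> ^ j)"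
proof (rule summable_comparison_test_ev)
  have "(\<lambda>j. s * \<rho> * s ^ j) \<longlonglongrightarrow> 0"
    using assms tendsto_mult[OF tendsto_const LIMSEQ_power_zero[of s]] by simp
  then have "\<forall>\<^sub>F j in sequentially. s * \<rho> * s ^ j < 1/2"
    by (rule order_tendstoD) simp
  then have "\<forall>\<^sub>F j in sequentially. s ^ (j + 1) * \<rho> \<le> 1/2"
    by (rule eventually_mono) (simp add: algebra_simps)
  then show "\<forall>\<^sub>F j in sequentially. norm (s ^ (j * (j + 1)) * \<rho> ^ j) \<le> (1/2) ^ j"
  proof (rule eventually_mono)
    fix j assume "s ^ (j + 1) * \<rho> \<le> 1/2"
    then have "(s ^ (j + 1) * \<rho>) ^ j \<le> (1/2) ^ j" using assms by (intro power_mono) auto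
    moreover have "s ^ (j * (j + 1)) * \<rho> ^ j = (s ^ (j + 1) * \<rho>) ^ j"
      by (simp add: power_mult_distrib power_add flip: power_mult[of s j, unfolded mult.commute[of j]])
    ultimately show "norm (s ^ (j * (j + 1)) * \<rho> ^ j) \<le> (1/2) ^ j" using assms by simp
  qed
qed simp

lemma summable_norm_partial_theta_terms:
  "norm q < 1 \<Longrightarrow> summable (\<lambda>j. norm (partial_theta_coeff q j * z ^ j))"
  unfolding norm_partial_theta_term by (intro summable_theta_majorant) auto

lemma partial_theta_has_field_derivative:
  assumes "norm q < 1"
  shows "(partial_theta q has_field_derivative (\<Sum>j. diffs (partial_theta_coeff q) j * z ^ j)) (at z)"
  unfolding partial_theta_eq_power_series
  using summable_norm_cancel[OF summable_norm_partial_theta_terms[OF assms]]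
  by (rule termdiffs_strong_converges_everywhere)

lemma holomorphic_on_partial_theta: "norm q < 1 \<Longrightarrow> partial_theta q holomorphic_on S"
  using partial_theta_has_field_derivative
  by (auto simp: holomorphic_on_def field_differentiable_def intro: has_field_derivative_at_within)

lemma partial_theta_at_0 [simp]: "partial_theta q 0 = 1"
  by (simp add: partial_theta_eq_power_series partial_theta_coeff_def)

lemma partial_theta_not_constant:
  assumes "norm q < 1" "q \<noteq> 0"
  shows "\<not> partial_theta q constant_on UNIV"
proof
  assume "partial_theta q constant_on UNIV"
  then have "(partial_theta q has_field_derivative 0) (at 0)"
    by (auto simp: constant_on_def fun_eq_iff[symmetric])
  moreover have "(partial_theta q has_field_derivative q) (at 0)"
    using partial_theta_has_field_derivative[OF assms(1), of 0]
    by (simp add: diffs_def partial_theta_coeff_def)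
  ultimately show False using assms(2) DERIV_unique by blast
qed

lemma finite_partial_theta_zeros_in_disc:
  assumes "0 < norm q" "norm q < 1"
  shows "finite {p. partial_theta q p = 0 \<and> norm p < r}"
proof -
  have "finite {p \<in> cball 0 r. partial_theta q p = 0}"
    using assms by (intro holomorphic_compact_finite_zeros[OF holomorphic_on_partial_theta
        open_UNIV connected_UNIV compact_cball subset_UNIV] partial_theta_not_constant) auto
  then show ?thesis by (rule finite_subset[rotated]) auto
qed

lemma power_exponent_shift:
  fixes s t :: real
  assumes "s * t = 1" and "j = k + d \<or> k = j + d"
  shows "s ^ (j * (j + 1)) * t ^ ((2 * k + 1) * j) = s ^ (k * (k + 1)) * t ^ ((2 * k + 1) * k) * s ^ d\<^sup>2"
proof -
  let ?a = "j * (j + 1)" and ?b = "k * (k + 1) + d\<^sup>2"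
  let ?c = "(2 * k + 1) * j" and ?e = "(2 * k + 1) * k"
  have exponents: "?a + ?e = ?b + ?c"
    using assms(2) by (auto simp: algebra_simps power2_eq_square)
  have "s ^ ?a * t ^ ?c * (s * t) ^ ?e = s ^ (?a + ?e) * t ^ (?c + ?e)"
    by (simp add: power_add power_mult_distrib)
  also have "\<dots> = s ^ (?b + ?c) * t ^ (?c + ?e)" by (simp only: exponents)
  also have "\<dots> = s ^ ?b * t ^ ?e * (s * t) ^ ?c" by (simp add: power_add power_mult_distrib)
  finally show ?thesis using assms(1) by (simp add: power_add)
qed

lemma theta_majorant_sum_less:
  fixes s :: real and k :: nat
  assumes "0 < s" "s < 1"
  defines "u \<equiv> \<lambda>j. s ^ (j * (j + 1)) * (1 / s) ^ ((2 * k + 1) * j)"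
  shows "suminf u < u k * (1 + 2 * square_power_series s)"
proof -
  have "u = (\<lambda>j. s ^ (j * (j + 1)) * ((1 / s) ^ (2 * k + 1)) ^ j)"
    by (simp only: u_def power_mult)
  then have summable_u: "summable u"
    using summable_theta_majorant[of s "(1 / s) ^ (2 * k + 1)"] assms by simp
  have "s * (1 / s) = 1" using assms by simp
  then have u_shift: "u j = u k * s ^ d\<^sup>2" if "j = k + d \<or> k = j + d" for j d
    unfolding u_def using that by (rule power_exponent_shift)
  have summable_squares: "summable (\<lambda>m. s ^ m\<^sup>2)"
    using summable_square_powers[of s] assms by (subst summable_Suc_iff[symmetric]) simp
  have "(\<Sum>m. u (m + k)) = (\<Sum>m. u k * s ^ m\<^sup>2)"
    by (intro arg_cong[where f = suminf] ext u_shift) simp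
  also have "\<dots> = u k * (\<Sum>m. s ^ m\<^sup>2)" by (rule suminf_mult[OF summable_squares])
  also have "(\<Sum>m. s ^ m\<^sup>2) = 1 + square_power_series s"
    using suminf_split_head[OF summable_squares] by (simp add: square_power_series_def)
  finally have tail: "(\<Sum>m. u (m + k)) = u k * (1 + square_power_series s)" .
  have "(\<Sum>j<k. u j) = (\<Sum>j<k. u k * s ^ (k - j)\<^sup>2)"
    by (intro sum.cong refl u_shift) auto
  also have "\<dots> = u k * (\<Sum>\<nu><k. s ^ (\<nu> + 1)\<^sup>2)"
    by (subst sum.nat_diff_reindex[symmetric]) (simp add: sum_distrib_left Suc_diff_Suc)
  finally have head: "(\<Sum>j<k. u j) = u k * (\<Sum>\<nu><k. s ^ (\<nu> + 1)\<^sup>2)" .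
  have "(\<Sum>\<nu><k. s ^ (\<nu> + 1)\<^sup>2) < square_power_series s"
    unfolding square_power_series_def using assms by (intro sum_less_suminf summable_square_powers) auto
  moreover have "0 < u k" using assms by (simp add: u_def)
  moreover have "suminf u = (\<Sum>m. u (m + k)) + (\<Sum>j<k. u j)"
    by (rule suminf_split_initial_segment[OF summable_u])
  ultimately show ?thesis unfolding tail head by (simp add: algebra_simps)
qed

lemma partial_theta_dominant_term:
  assumes "0 < norm q" "norm q < 1" "2 * square_power_series (sqrt (norm q)) \<le> 1"
    and "norm z = (1 / sqrt (norm q)) ^ (2 * k + 1)"
  shows "norm (partial_theta q z - partial_theta_coeff q k * z ^ k) < norm (partial_theta_coeff q k * z ^ k)"
proof -
  define s where "s = sqrt (norm q)"
  define a where "a j = partial_theta_coeff q j * z ^ j" for j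
  define u where "u = (\<lambda>j. s ^ (j * (j + 1)) * (1 / s) ^ ((2 * k + 1) * j))"
  define b where "b j = a j - (if j = k then a k else 0)" for j
  have s: "0 < s" "s < 1" using assms by (auto simp: s_def)
  have norm_a: "norm (a j) = u j" for j
    unfolding a_def u_def norm_partial_theta_term assms(4) s_def[symmetric] by (simp only: power_mult)
  have "a sums partial_theta q z"
    using summable_norm_cancel[OF summable_norm_partial_theta_terms[OF assms(2)]]
    unfolding a_def partial_theta_eq_power_series by (rule summable_sums)
  then have "b sums (partial_theta q z - a k)"
    unfolding b_def by (intro sums_diff sums_single)
  moreover have "(\<lambda>j. norm (b j)) sums (suminf u - u k)"
  proof -
    have "summable (\<lambda>j. u j)"
      using summable_norm_partial_theta_terms[OF assms(2), of z] by (simp add: norm_a[symmetric] a_def)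
    moreover have "norm (b j) = u j - (if j = k then u k else 0)" for j
      by (simp add: b_def norm_a)
    ultimately show ?thesis by (simp only:) (intro sums_diff summable_sums sums_single)
  qed
  ultimately have "norm (partial_theta q z - a k) \<le> suminf u - u k"
    using summable_norm[of b] by (simp add: sums_iff)
  also have "\<dots> < u k"
  proof -
    have "suminf u < u k * (1 + 2 * square_power_series s)"
      unfolding u_def by (rule theta_majorant_sum_less[OF s])
    moreover have "u k * (1 + 2 * square_power_series s) \<le> u k * 2"
      using assms(3) s by (intro mult_left_mono) (auto simp: s_def u_def)
    ultimately show ?thesis by linarith
  qed
  finally show ?thesis using norm_a[of k] by (simp add: a_def)
qed

lemma sum_winding_number_circlepath_zorder:
  fixes f :: "complex \<Rightarrow> complex"
  assumes "finite {p \<in> S. f p = 0}" "ball 0 r \<subseteq> S" "0 < r" "\<And>p. norm p = r \<Longrightarrow> f p \<noteq> 0"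
  shows "(\<Sum>p\<in>{p \<in> S. f p = 0}. winding_number (circlepath 0 r) p * of_int (zorder f p))
           = of_int (\<Sum>p | f p = 0 \<and> norm p < r. zorder f p)"
proof -
  have winding: "winding_number (circlepath 0 r) p = (if norm p < r then 1 else 0)" if "f p = 0" for p
  proof (cases "norm p < r")
    case True
    then show ?thesis by (simp add: winding_number_circlepath)
  next
    case False
    with that assms(4) have "r < norm p" by force
    then show ?thesis using assms(3)
      by (auto intro!: winding_number_zero_outside[of _ "cball 0 r"])
  qed
  have "(\<Sum>p\<in>{p \<in> S. f p = 0}. winding_number (circlepath 0 r) p * of_int (zorder f p))
      = (\<Sum>p\<in>{p \<in> S. f p = 0}. if norm p < r then of_int (zorder f p) else 0)"
    by (intro sum.cong) (auto simp: winding)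
  also have "\<dots> = (\<Sum>p\<in>{p \<in> {p \<in> S. f p = 0}. norm p < r}. of_int (zorder f p))"
    by (rule sum.inter_filter[OF assms(1), symmetric])
  also have "{p \<in> {p \<in> S. f p = 0}. norm p < r} = {p. f p = 0 \<and> norm p < r}"
    using assms(2) by auto
  finally show ?thesis by simp
qed

lemma zorder_sum_monomial:
  fixes c :: complex
  assumes "c \<noteq> 0" "0 < r"
  shows "(\<Sum>p | c * p ^ k = 0 \<and> norm p < r. zorder (\<lambda>z. c * z ^ k) p) = int k"
proof (cases "k = 0")
  case True
  then show ?thesis using assms by auto
next
  case False
  then have "{p. c * p ^ k = 0 \<and> norm p < r} = {0}" using assms by auto
  moreover have "zorder (\<lambda>z. c * z ^ k) 0 = int k"
    by (rule zorder_eqI[of UNIV 0 "\<lambda>_. c"]) (use assms in auto)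
  ultimately show ?thesis by simp
qed

lemma partial_theta_zorder_sum_in_disc:
  assumes q: "0 < norm q" "norm q < 1" and F: "2 * square_power_series (sqrt (norm q)) \<le> 1"
  shows "(\<Sum>p | partial_theta q p = 0 \<and> norm p < (1 / sqrt (norm q)) ^ (2 * k + 1).
            zorder (partial_theta q) p) = int k"
proof -
  define r where "r = (1 / sqrt (norm q)) ^ (2 * k + 1)"
  define c where "c = partial_theta_coeff q k"
  define f where "f z = c * z ^ k" for z
  define g where "g z = partial_theta q z - f z" for z
  \<comment> \<open>Rouche's theorem needs finitely many zeros in the ambient open set, so a disc, not UNIV\<close>
  define S where "S = ball (0::complex) (r + 1)"
  define \<gamma> where "\<gamma> = circlepath 0 r"
  have r: "0 < r" using q by (simp add: r_def)
  have c: "c \<noteq> 0" using q by (simp add: c_def partial_theta_coeff_def)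
  have dominant: "norm (g z) < norm (f z)" if "norm z = r" for z
    using partial_theta_dominant_term[OF q F] that by (simp add: g_def f_def c_def r_def)
  have finite_zeros_theta: "finite {p \<in> S. partial_theta q p = 0}"
    using finite_partial_theta_zeros_in_disc[OF q, of "r + 1"]
    by (rule finite_subset[rotated]) (auto simp: S_def)
  have finite_zeros_f: "finite {p \<in> S. f p = 0}"
    by (rule finite_subset[of _ "{0}"]) (auto simp: f_def c)
  have "(\<Sum>p\<in>{p \<in> S. f p + g p = 0}. winding_number \<gamma> p * of_int (zorder (\<lambda>p. f p + g p) p))
      = (\<Sum>p\<in>{p \<in> S. f p = 0}. winding_number \<gamma> p * of_int (zorder f p))"
  proof (rule Rouche_theorem)
    show "open S" "connected S" "valid_path \<gamma>" "pathfinish \<gamma> = pathstart \<gamma>"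
      by (auto simp: S_def \<gamma>_def)
    show "finite {p \<in> S. f p + g p = 0}" using finite_zeros_theta by (simp add: g_def)
    show "finite {p \<in> S. f p = 0}" by (rule finite_zeros_f)
    show "f holomorphic_on S" unfolding f_def by (intro holomorphic_intros)
    show "g holomorphic_on S"
      unfolding g_def f_def by (intro holomorphic_intros holomorphic_on_partial_theta q(2))
    show "path_image \<gamma> \<subseteq> S" "\<forall>z\<in>path_image \<gamma>. norm (g z) < norm (f z)"
      using r dominant by (auto simp: \<gamma>_def S_def)
    show "\<forall>z. z \<notin> S \<longrightarrow> winding_number \<gamma> z = 0"
      using r by (auto intro!: winding_number_zero_outside[of _ "cball 0 r"]
          simp: \<gamma>_def S_def)
  qed
  then have "(\<Sum>p\<in>{p \<in> S. partial_theta q p = 0}. winding_number \<gamma> p * of_int (zorder (partial_theta q) p))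
      = (\<Sum>p\<in>{p \<in> S. f p = 0}. winding_number \<gamma> p * of_int (zorder f p))"
    by (simp add: g_def)
  moreover have "(\<Sum>p\<in>{p \<in> S. partial_theta q p = 0}. winding_number \<gamma> p * of_int (zorder (partial_theta q) p))
      = of_int (\<Sum>p | partial_theta q p = 0 \<and> norm p < r. zorder (partial_theta q) p)"
    unfolding \<gamma>_def using dominant
    by (intro sum_winding_number_circlepath_zorder[OF finite_zeros_theta _ r]) (force simp: S_def g_def)+
  moreover have "(\<Sum>p\<in>{p \<in> S. f p = 0}. winding_number \<gamma> p * of_int (zorder f p))
      = of_int (\<Sum>p | f p = 0 \<and> norm p < r. zorder f p)"
    unfolding \<gamma>_def using dominant
    by (intro sum_winding_number_circlepath_zorder[OF finite_zeros_f _ r]) (force simp: S_def)+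
  ultimately have "(\<Sum>p | partial_theta q p = 0 \<and> norm p < r. zorder (partial_theta q) p)
      = (\<Sum>p | f p = 0 \<and> norm p < r. zorder f p)"
    by (metis of_int_eq_iff)
  also have "(\<Sum>p | f p = 0 \<and> norm p < r. zorder f p) = int k"
    using zorder_sum_monomial[OF c r] by (simp add: f_def[abs_def])
  finally show ?thesis by (simp add: r_def)
qed

lemma deriv_nonzero_at_simple_zero:
  fixes f :: "complex \<Rightarrow> complex"
  assumes "f holomorphic_on S" "open S" "connected S" "p \<in> S" "\<exists>w\<in>S. f w \<noteq> 0"
    and "zorder f p = 1"
  shows "deriv f p \<noteq> 0"
proof -
  define g where "g = zor_poly f p"
  obtain r where r: "0 < r" "cball p r \<subseteq> S" "g holomorphic_on cball p r"
    and factor: "\<And>w. w \<in> cball p r \<Longrightarrow> f w = g w * (w - p) \<and> g w \<noteq> 0"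
    using zorder_exist_zero[OF assms(1-5)] assms(6) unfolding g_def by auto
  have "g holomorphic_on ball p r" using r(3) by (rule holomorphic_on_subset) auto
  then obtain g' where "(g has_field_derivative g') (at p)"
    using r(1) holomorphic_on_imp_differentiable_at[of g "ball p r" p]
    by (auto simp: field_differentiable_def)
  then have "((\<lambda>w. g w * (w - p)) has_field_derivative g p) (at p)"
    by (auto intro!: derivative_eq_intros)
  then have "(f has_field_derivative g p) (at p)"
    by (rule has_field_derivative_transform_within_open[of _ _ _ "ball p r"]) (use r factor in auto)
  then show ?thesis using factor[of p] r(1) by (simp add: DERIV_imp_deriv)
qed

lemma int_card_le_sum:
  fixes h :: "'a \<Rightarrow> int"
  assumes "\<And>x. x \<in> X \<Longrightarrow> 1 \<le> h x"
  shows "int (card X) \<le> sum h X"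
proof -
  have "int (card X) = (\<Sum>x\<in>X. 1)" by simp
  also have "\<dots> \<le> sum h X" using assms by (intro sum_mono) auto
  finally show ?thesis .
qed

lemma enumerate_by_disc_counts:
  fixes Z :: "'a::real_normed_vector set" and m :: "'a \<Rightarrow> int" and r :: "nat \<Rightarrow> real"
  assumes finite: "\<And>k. finite {p \<in> Z. norm p < r k}"
    and mult: "\<And>p. p \<in> Z \<Longrightarrow> 1 \<le> m p"
    and count: "\<And>k. (\<Sum>p | p \<in> Z \<and> norm p < r k. m p) = int k"
    and "incseq r" and r_at_top: "filterlim r at_top sequentially"
  shows "\<exists>\<xi>. Z = range \<xi> \<and> (\<forall>n. norm (\<xi> n) < norm (\<xi> (Suc n))) \<and>
           filterlim (\<lambda>n. norm (\<xi> n)) at_top sequentially \<and> (\<forall>n. m (\<xi> n) = 1)"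
proof -
  define D where "D k = {p \<in> Z. norm p < r k}" for k
  define A where "A k = D (Suc k) - D k" for k
  have D_mono: "D k \<subseteq> D (Suc k)" for k
    using \<open>incseq r\<close> by (auto simp: D_def incseq_def intro: less_le_trans)
  have finite_D: "finite (D k)" for k using finite by (simp add: D_def)
  have sum_A: "sum m (A k) = 1" for k
  proof -
    have "sum m (D (Suc k)) = sum m (A k) + sum m (D k)"
      unfolding A_def by (rule sum.subset_diff[OF D_mono finite_D])
    then show ?thesis using count[of k] count[of "Suc k"] by (simp add: D_def)
  qed
  have "\<exists>p. A k = {p}" for k
  proof -
    have "int (card (A k)) \<le> 1"
      using int_card_le_sum[of "A k" m] mult sum_A[of k] by (auto simp: A_def D_def)
    moreover have "A k \<noteq> {}" using sum_A[of k] by auto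
    moreover have "finite (A k)" using finite_D by (simp add: A_def)
    ultimately have "card (A k) = Suc 0" using card_0_eq[of "A k"] by linarith
    then show ?thesis by (simp add: card_1_singleton_iff)
  qed
  then obtain \<xi> where \<xi>: "\<And>k. A k = {\<xi> k}" by metis
  have "\<xi> k \<in> A k" for k using \<xi> by simp
  then have in_shell: "\<xi> k \<in> Z" "r k \<le> norm (\<xi> k)" "norm (\<xi> k) < r (Suc k)" for k
    by (auto simp: A_def D_def not_less)
  have "D 0 = {}"
    using int_card_le_sum[of "D 0" m] mult count[of 0] finite_D[of 0] by (auto simp: D_def)
  then have D_eq: "D n = \<xi> ` {..<n}" for n
  proof (induction n)
    case (Suc n)
    have "D (Suc n) = D n \<union> A n" using D_mono[of n] by (auto simp: A_def)
    then show ?case using Suc \<xi>[of n] by (auto simp: lessThan_Suc)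
  qed simp
  have "Z = range \<xi>"
  proof
    show "Z \<subseteq> range \<xi>"
    proof
      fix p assume "p \<in> Z"
      obtain n where "norm p < r n"
        using filterlim_at_top_dense[THEN iffD1, OF r_at_top, rule_format, of "norm p"]
        by (auto simp: eventually_sequentially)
      then have "p \<in> D n" using \<open>p \<in> Z\<close> by (simp add: D_def)
      then show "p \<in> range \<xi>" by (auto simp: D_eq)
    qed
    show "range \<xi> \<subseteq> Z" using in_shell(1) by auto
  qed
  moreover have "norm (\<xi> n) < norm (\<xi> (Suc n))" for n
    using in_shell(2,3) less_le_trans by blast
  moreover have "filterlim (\<lambda>n. norm (\<xi> n)) at_top sequentially"
    using r_at_top by (rule filterlim_at_top_mono) (use in_shell(2) in auto)
  moreover have "m (\<xi> n) = 1" for n using sum_A[of n] by (simp add: \<xi>)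
  ultimately show ?thesis by blast
qed

lemma filterlim_odd_powers_at_top:
  fixes t :: real
  assumes "1 < t"
  shows "filterlim (\<lambda>k. t ^ (2 * k + 1)) at_top sequentially"
proof -
  have "filterlim (\<lambda>k. t ^ k) at_top sequentially"
    using filterlim_realpow_sequentially_gt1[of t] assms
    by (auto dest: filterlim_at_infinity_imp_norm_at_top simp: norm_power)
  moreover have "t ^ k \<le> t ^ (2 * k + 1)" for k using assms by (intro power_increasing) auto
  ultimately show ?thesis by (auto intro: filterlim_at_top_mono always_eventually)
qed

lemma partial_theta_zeros_simple_and_separated:
  assumes q: "0 < norm q" "norm q < 1" and F: "2 * square_power_series (sqrt (norm q)) \<le> 1"
  shows "\<exists>\<xi>. {z. partial_theta q z = 0} = range \<xi> \<and> (\<forall>n. norm (\<xi> n) < norm (\<xi> (Suc n))) \<and>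
           filterlim (\<lambda>n. norm (\<xi> n)) at_top sequentially \<and> (\<forall>n. zorder (partial_theta q) (\<xi> n) = 1)"
proof (rule enumerate_by_disc_counts[where r = "\<lambda>k. (1 / sqrt (norm q)) ^ (2 * k + 1)"])
  have t: "1 < 1 / sqrt (norm q)" using q by simp
  show "incseq (\<lambda>k. (1 / sqrt (norm q)) ^ (2 * k + 1))"
    by (rule incseq_SucI, rule power_increasing) (use t in auto)
  show "filterlim (\<lambda>k. (1 / sqrt (norm q)) ^ (2 * k + 1)) at_top sequentially"
    by (rule filterlim_odd_powers_at_top[OF t])
  show "finite {p \<in> {z. partial_theta q z = 0}. norm p < (1 / sqrt (norm q)) ^ (2 * k + 1)}" for k
    using finite_partial_theta_zeros_in_disc[OF q] by simp
  show "(\<Sum>p | p \<in> {z. partial_theta q z = 0} \<and> norm p < (1 / sqrt (norm q)) ^ (2 * k + 1).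
          zorder (partial_theta q) p) = int k" for k
    using partial_theta_zorder_sum_in_disc[OF q F] by simp
  have "\<exists>w\<in>UNIV. partial_theta q w \<noteq> 0" by (rule bexI[of _ 0]) simp_all
  then show "1 \<le> zorder (partial_theta q) p" if "p \<in> {z. partial_theta q z = 0}" for p
    using zorder_exist_zero[OF holomorphic_on_partial_theta[OF q(2)] open_UNIV connected_UNIV UNIV_I,
        where z = p] that by simp
qed

theorem lemma1:
  fixes q :: complex
  assumes "0 < norm q" and "norm q \<le> c0"
  shows "\<exists>\<xi> :: nat \<Rightarrow> complex.
           {z. partial_theta q z = 0} = range \<xi> \<and>
           (\<forall>n. norm (\<xi> n) < norm (\<xi> (Suc n))) \<and>
           filterlim (\<lambda>n. norm (\<xi> n)) at_top sequentially \<and>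
           (\<forall>n. deriv (partial_theta q) (\<xi> n) \<noteq> 0)"
proof -
  have q: "0 < norm q" "norm q < 1" using assms c0_characterization by auto
  have F: "2 * square_power_series (sqrt (norm q)) \<le> 1"
    using square_power_series_mono[of "sqrt (norm q)" "sqrt c0"] assms c0_characterization by auto
  obtain \<xi> where \<xi>: "{z. partial_theta q z = 0} = range \<xi>" "\<forall>n. norm (\<xi> n) < norm (\<xi> (Suc n))"
      "filterlim (\<lambda>n. norm (\<xi> n)) at_top sequentially" "\<forall>n. zorder (partial_theta q) (\<xi> n) = 1"
    using partial_theta_zeros_simple_and_separated[OF q F] by blast
  have "\<exists>w\<in>UNIV. partial_theta q w \<noteq> 0" by (rule bexI[of _ 0]) simp_all
  then have "deriv (partial_theta q) (\<xi> n) \<noteq> 0" for n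
    using deriv_nonzero_at_simple_zero[OF holomorphic_on_partial_theta[OF q(2)] open_UNIV
        connected_UNIV UNIV_I] \<xi>(4) by blast
  with \<xi> show ?thesis by blast
qed

end
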